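(* Let $\mathcal{D}=(D,B,\mu)$ be a blueprint. For any two threshold functions $t_1,t_2:B\to[-1,1]$, $$|\mathsf{Soundness}(\mathcal{D},t_1)-\mathsf{Soundness}(\mathcal{D},t_2)|\le\sum_{b\in B}|t_1(b)-t_2(b)|.$$
   Context: $\Phi$ is the standard normal CDF. For $\rho\in[-1,1]$, $\Gamma_\rho(q_1,q_2)=\Pr[x\le\Phi^{-1}(q_1),\,y\le\Phi^{-1}(q_2)]$ for jointly Gaussian standard normals $x,y$ with correlation $\rho$. A configuration is $\theta=(b_i,b_j,b_{ij})\in[-1,1]^3$ with $-1+|b_i+b_j|\le b_{ij}\le1-|b_i-b_j|$. Its relative pairwise bias is $\rho(\theta)=\frac{b_{ij}-b_ib_j}{\sqrt{(1-b_i^2)(1-b_j^2)}}$ (or $0$ if the denominator is $0$). A blueprint $\mathcal{D}=(D,B,\mu)$: $D$ a finitely supported distribution on configurations, $B$ the set of biases (first two coordinates) appearing in its support, $\mu$ a probability measure on $B$ with $\sum_b\mu(b)b=0$. For a threshold function $t:B\to[-1,1]$, $\mathsf{Soundness}(\mathcal{D},t)=\mathbb{E}_{\theta=(b_i,b_j,b_{ij})\sim D}[\frac{1-t(b_i)}{2}+\frac{1-t(b_j)}{2}-2\Gamma_{\rho(\theta)}(\frac{1-t(b_i)}{2},\frac{1-t(b_j)}{2})]$. *)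

theory Defs
  imports "HOL-Probability.Probability"
begin

definition std_normal :: "real measure" where
  "std_normal = density lborel (\<lambda>x. ennreal (std_normal_density x))"

definition Phi :: "real \<Rightarrow> real" where
  "Phi x = measure std_normal {..x}"

definition Phi_inv :: "real \<Rightarrow> ereal" where
  "Phi_inv q = (if q \<le> 0 then -\<infinity> else if q \<ge> 1 then \<infinity> else ereal (THE x. Phi x = q))"

text \<open>Jointly Gaussian standard normals \<open>(x,y)\<close> with correlation \<open>\<rho>\<close> are realised as
  \<open>x = u\<close>, \<open>y = \<rho> u + sqrt(1-\<rho>\<^sup>2) v\<close> with \<open>u, v\<close> independent standard normals.\<close>
definition Gamma :: "real \<Rightarrow> real \<Rightarrow> real \<Rightarrow> real" where
  "Gamma \<rho> q1 q2 = measure (std_normal \<Otimes>\<^sub>M std_normal)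
     {(u, v). ereal u \<le> Phi_inv q1 \<and> ereal (\<rho> * u + sqrt (1 - \<rho>\<^sup>2) * v) \<le> Phi_inv q2}"

type_synonym config = "real \<times> real \<times> real"

definition is_config :: "config \<Rightarrow> bool" where
  "is_config \<theta> = (case \<theta> of (b_i, b_j, bij_) \<Rightarrow>
     b_i \<in> {-1..1} \<and> b_j \<in> {-1..1} \<and> bij_ \<in> {-1..1} \<and>
     -1 + \<bar>b_i + b_j\<bar> \<le> bij_ \<and> bij_ \<le> 1 - \<bar>b_i - b_j\<bar>)"

definition rel_bias :: "config \<Rightarrow> real" where
  "rel_bias \<theta> = (case \<theta> of (b_i, b_j, bij_) \<Rightarrow>
     (let d = sqrt ((1 - b_i\<^sup>2) * (1 - b_j\<^sup>2)) in if d = 0 then 0 else (bij_ - b_i * b_j) / d))"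

definition biases :: "config pmf \<Rightarrow> real set" where
  "biases D = (\<lambda>\<theta>. fst \<theta>) ` set_pmf D \<union> (\<lambda>\<theta>. fst (snd \<theta>)) ` set_pmf D"

definition is_blueprint :: "config pmf \<Rightarrow> real set \<Rightarrow> real pmf \<Rightarrow> bool" where
  "is_blueprint D B \<mu> \<longleftrightarrow>
     finite (set_pmf D) \<and> (\<forall>\<theta>\<in>set_pmf D. is_config \<theta>) \<and>
     B = biases D \<and> set_pmf \<mu> \<subseteq> B \<and> (\<Sum>b\<in>B. pmf \<mu> b * b) = 0"

definition is_threshold :: "real set \<Rightarrow> (real \<Rightarrow> real) \<Rightarrow> bool" where
  "is_threshold B t \<longleftrightarrow> (\<forall>b\<in>B. t b \<in> {-1..1})"

definition Soundness :: "config pmf \<Rightarrow> (real \<Rightarrow> real) \<Rightarrow> real" where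
  "Soundness D t = measure_pmf.expectation D (\<lambda>\<theta>. case \<theta> of (b_i, b_j, bij_) \<Rightarrow>
      (1 - t b_i) / 2 + (1 - t b_j) / 2 - 2 * Gamma (rel_bias \<theta>) ((1 - t b_i) / 2) ((1 - t b_j) / 2))"

end

theory Submission
  imports Defs
begin

text \<open>The soundness integrand is \<open>F(q\<^sub>1, q\<^sub>2) = q\<^sub>1 + q\<^sub>2 - 2 \<Gamma>\<^sub>\<rho>(q\<^sub>1, q\<^sub>2)\<close>
  at \<open>q = (1 - t(b))/2\<close>. Both coordinates of the correlated Gaussian pair are standard
  normal (this needs \<open>|\<rho>(\<theta>)| \<le> 1\<close>), so raising one threshold from \<open>q\<close> to \<open>q'\<close> adds
  to \<open>\<Gamma>\<^sub>\<rho>\<close> the probability of part of a strip of mass \<open>q' - q\<close>. The increment of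
  \<open>\<Gamma>\<^sub>\<rho>\<close> therefore lies in \<open>[0, q' - q]\<close>, which makes \<open>F\<close> 1-Lipschitz in each
  argument. Each configuration thus changes its contribution by at most
  \<open>(|t\<^sub>1(b\<^sub>i) - t\<^sub>2(b\<^sub>i)| + |t\<^sub>1(b\<^sub>j) - t\<^sub>2(b\<^sub>j)|)/2\<close>, which is bounded by
  the sum over \<open>B\<close>, and averaging over \<open>D\<close> gives the claim.\<close>

lemma prob_space_std_normal: "prob_space std_normal"
  unfolding std_normal_def by (rule prob_space_normal_density) simp

lemma sets_std_normal [simp, measurable_cong]: "sets std_normal = sets borel"
  by (simp add: std_normal_def)

lemma space_std_normal [simp]: "space std_normal = UNIV"
  by (simp add: std_normal_def)

lemma real_distribution_std_normal: "real_distribution std_normal"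
  by (simp add: real_distribution_def real_distribution_axioms_def prob_space_std_normal)

lemma Phi_eq_cdf: "Phi = cdf std_normal"
  by (auto simp: Phi_def cdf_def)

lemma std_normal_null_sets:
  "A \<in> null_sets std_normal \<longleftrightarrow> A \<in> null_sets lborel"
proof -
  have "A \<in> null_sets std_normal \<longleftrightarrow>
      A \<in> sets borel \<and> (AE x in lborel. x \<in> A \<longrightarrow> std_normal_density x = 0)"
    unfolding std_normal_def by (subst null_sets_density_iff) auto
  also have "\<dots> \<longleftrightarrow> A \<in> sets borel \<and> (AE x in lborel. x \<notin> A)"
  proof -
    have "(x \<in> A \<longrightarrow> std_normal_density x = 0) \<longleftrightarrow> x \<notin> A" for x
      using normal_density_pos[of 1 0 x] by auto
    then show ?thesis by simp
  qed
  also have "\<dots> \<longleftrightarrow> A \<in> null_sets lborel"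
    by (metis AE_iff_null_sets null_setsD2 sets_lborel)
  finally show ?thesis .
qed

lemma isCont_Phi: "isCont Phi x"
proof -
  have "{x} \<in> null_sets std_normal"
    by (simp add: std_normal_null_sets countable_imp_null_set_lborel)
  then have "measure std_normal {x} = 0"
    by (simp add: measure_def null_setsD1)
  then show ?thesis
    unfolding Phi_eq_cdf
    using finite_borel_measure.isCont_cdf[OF real_distribution.finite_borel_measure_M[OF
        real_distribution_std_normal]] by simp
qed

lemma strict_mono_Phi: "strict_mono Phi"
proof
  fix x y :: real
  assume "x < y"
  interpret real_distribution std_normal
    by (rule real_distribution_std_normal)
  have "emeasure lborel {x<..y} \<noteq> 0"
    using \<open>x < y\<close> by simp
  then have "{x<..y} \<notin> null_sets std_normal"
    unfolding std_normal_null_sets by (blast dest: null_setsD1)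
  then have "measure std_normal {x<..y} \<noteq> 0"
    by (simp add: emeasure_eq_measure null_sets_def)
  then show "Phi x < Phi y"
    using cdf_diff_eq[OF \<open>x < y\<close>] measure_nonneg[of std_normal "{x<..y}"]
    unfolding Phi_eq_cdf by linarith
qed

lemma Phi_surj:
  assumes "0 < q" "q < 1"
  shows "\<exists>x. Phi x = q"
proof -
  interpret real_distribution std_normal
    by (rule real_distribution_std_normal)
  obtain a where a: "Phi a < q"
    using order_tendstoD(2)[OF cdf_lim_at_bot \<open>0 < q\<close>]
    by (auto simp: Phi_eq_cdf eventually_at_bot_linorder)
  obtain b0 where b0: "\<And>x. x \<ge> b0 \<Longrightarrow> Phi x > q"
    using order_tendstoD(1)[OF cdf_lim_at_top_prob \<open>q < 1\<close>]
    by (auto simp: Phi_eq_cdf eventually_at_top_linorder)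
  have "\<exists>x\<ge>a. x \<le> max a b0 \<and> Phi x = q"
    using a b0[of "max a b0"] isCont_Phi by (intro IVT) auto
  then show ?thesis
    by blast
qed

lemma Phi_inv_eq_ereal:
  assumes "0 < q" "q < 1"
  obtains x where "Phi_inv q = ereal x" and "Phi x = q"
proof -
  obtain x where x: "Phi x = q"
    using Phi_surj assms by blast
  have "(THE x. Phi x = q) = x"
    using x strict_mono_eq[OF strict_mono_Phi] by (intro the_equality) auto
  show ?thesis
    by (rule that) (use x assms \<open>(THE x. Phi x = q) = x\<close> in \<open>simp_all add: Phi_inv_def\<close>)
qed

lemma measure_std_normal_le_Phi_inv:
  assumes "0 \<le> q" "q \<le> 1"
  shows "measure std_normal {x. ereal x \<le> Phi_inv q} = q"
proof -
  consider "q = 0" | "q = 1" | "0 < q" "q < 1"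
    using assms by linarith
  then show ?thesis
  proof cases
    case 2
    then show ?thesis
      using prob_space.prob_space[OF prob_space_std_normal] by (simp add: Phi_inv_def)
  next
    case 3
    then obtain x where "Phi_inv q = ereal x" "Phi x = q"
      by (rule Phi_inv_eq_ereal)
    then show ?thesis
      by (simp add: Phi_def atMost_def)
  qed (simp add: Phi_inv_def)
qed

lemma Phi_inv_mono:
  assumes "0 \<le> q" "q \<le> q'" "q' \<le> 1"
  shows "Phi_inv q \<le> Phi_inv q'"
proof -
  consider "q = 0" | "q' = 1" | "0 < q" "q' < 1"
    using assms by linarith
  then show ?thesis
  proof cases
    case 3
    have "0 < q'" "q < 1"
      using 3 assms by linarith+
    obtain x where x: "Phi_inv q = ereal x" "Phi x = q"
      using Phi_inv_eq_ereal \<open>0 < q\<close> \<open>q < 1\<close> .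
    obtain x' where x': "Phi_inv q' = ereal x'" "Phi x' = q'"
      using Phi_inv_eq_ereal \<open>0 < q'\<close> \<open>q' < 1\<close> .
    show ?thesis
      using x x' assms strict_mono_less_eq[OF strict_mono_Phi, of x x'] by simp
  qed (simp_all add: Phi_inv_def)
qed

abbreviation std_normal_pair :: "(real \<times> real) measure" where
  "std_normal_pair \<equiv> std_normal \<Otimes>\<^sub>M std_normal"

lemma prob_space_std_normal_pair: "prob_space std_normal_pair"
  using prob_space_pair prob_space_std_normal by blast

lemma space_std_normal_pair [simp]: "space std_normal_pair = UNIV"
  by (simp add: space_pair_measure)

lemma (in prob_space) distr_pair_snd:
  assumes "sigma_finite_measure N"
  shows "distr (M \<Otimes>\<^sub>M N) N snd = N"
proof (intro measure_eqI)
  fix A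
  assume A: "A \<in> sets (distr (M \<Otimes>\<^sub>M N) N snd)"
  then have "emeasure (distr (M \<Otimes>\<^sub>M N) N snd) A = emeasure (M \<Otimes>\<^sub>M N) (space M \<times> A)"
    by (auto simp: emeasure_distr space_pair_measure dest: sets.sets_into_space
        intro!: arg_cong2[where f=emeasure])
  with A show "emeasure (distr (M \<Otimes>\<^sub>M N) N snd) A = emeasure N A"
    by (simp add: sigma_finite_measure.emeasure_pair_measure_Times[OF assms] emeasure_space_1)
qed simp

lemma distr_std_normal_pair_fst: "distr std_normal_pair lborel fst = std_normal"
proof -
  have "distr std_normal_pair lborel fst = distr std_normal_pair std_normal fst"
    by (rule distr_cong) auto
  also have "\<dots> = std_normal"
    by (rule prob_space.distr_pair_fst[OF prob_space_std_normal])
  finally show ?thesis .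
qed

lemma distr_std_normal_pair_snd: "distr std_normal_pair lborel snd = std_normal"
proof -
  have "distr std_normal_pair lborel snd = distr std_normal_pair std_normal snd"
    by (rule distr_cong) auto
  also have "\<dots> = std_normal"
    using prob_space.distr_pair_snd prob_space_std_normal prob_space_imp_sigma_finite by blast
  finally show ?thesis .
qed

lemma distributed_std_normal_iff:
  "distributed M lborel X std_normal_density \<longleftrightarrow>
    X \<in> borel_measurable M \<and> distr M lborel X = std_normal"
  by (auto simp: distributed_def std_normal_def)

lemma indep_var_std_normal_pair: "prob_space.indep_var std_normal_pair borel fst borel snd"
proof -
  interpret prob_space std_normal_pair
    by (rule prob_space_std_normal_pair)
  have "distr std_normal_pair borel fst = std_normal" "distr std_normal_pair borel snd = std_normal"
    using distr_std_normal_pair_fst distr_std_normal_pair_snd by (metis distr_cong sets_lborel)+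
  moreover have "distr std_normal_pair (borel \<Otimes>\<^sub>M borel) (\<lambda>\<omega>. \<omega>) = std_normal_pair"
    by (rule distr_id2) (auto intro!: sets_pair_measure_cong)
  ultimately show ?thesis
    by (subst indep_var_distribution_eq) simp
qed

lemma distributed_std_normal_pair_combination:
  assumes "a\<^sup>2 + b\<^sup>2 = 1"
  shows "distributed std_normal_pair lborel (\<lambda>\<omega>. a * fst \<omega> + b * snd \<omega>) std_normal_density"
proof -
  interpret prob_space std_normal_pair
    by (rule prob_space_std_normal_pair)
  have scaled: "distributed std_normal_pair lborel (\<lambda>\<omega>. c * X \<omega>) (normal_density 0 \<bar>c\<bar>)"
    if "c \<noteq> 0" "X = fst \<or> X = snd" for c X
    using normal_density_affine[of X 0 1 c 0] that distr_std_normal_pair_fst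
      distr_std_normal_pair_snd by (auto simp: distributed_std_normal_iff)
  consider "a = 0" | "b = 0" | "a \<noteq> 0" "b \<noteq> 0"
    by blast
  then show ?thesis
  proof cases
    case 1
    then have "\<bar>b\<bar> = 1"
      using assms by (simp add: abs_square_eq_1)
    then show ?thesis
      using scaled[of b snd] 1 by auto
  next
    case 2
    then have "\<bar>a\<bar> = 1"
      using assms by (simp add: abs_square_eq_1)
    then show ?thesis
      using scaled[of a fst] 2 by auto
  next
    case 3
    have "indep_var borel ((*) a \<circ> fst) borel ((*) b \<circ> snd)"
      by (rule indep_var_compose[OF indep_var_std_normal_pair]) auto
    then have "distributed std_normal_pair lborel (\<lambda>\<omega>. a * fst \<omega> + b * snd \<omega>)
        (normal_density (0 + 0) (sqrt (\<bar>a\<bar>\<^sup>2 + \<bar>b\<bar>\<^sup>2)))"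
      using 3 scaled[of a fst] scaled[of b snd] by (intro add_indep_normal) (auto simp: o_def)
    then show ?thesis
      using assms by simp
  qed
qed

lemma (in prob_space) prob_Int_increment_le:
  assumes "A \<subseteq> A'" "A \<in> events" "A' \<in> events" "E \<in> events"
  shows "prob (A \<inter> E) \<le> prob (A' \<inter> E)"
    and "prob (A' \<inter> E) - prob (A \<inter> E) \<le> prob A' - prob A"
proof -
  show "prob (A \<inter> E) \<le> prob (A' \<inter> E)"
    using assms by (intro finite_measure_mono) auto
  have "prob (A' \<inter> E) - prob (A \<inter> E) = prob ((A' \<inter> E) - (A \<inter> E))"
    using assms by (intro finite_measure_Diff[symmetric]) auto
  also have "\<dots> = prob ((A' - A) \<inter> E)"
    by (rule arg_cong[where f=prob]) blast
  also have "\<dots> \<le> prob (A' - A)"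
    using assms by (intro finite_measure_mono) auto
  also have "\<dots> = prob A' - prob A"
    using assms by (intro finite_measure_Diff)
  finally show "prob (A' \<inter> E) - prob (A \<inter> E) \<le> prob A' - prob A" .
qed

lemma (in prob_space) prob_std_normal_quantile_increment:
  assumes X: "distr M lborel X = std_normal"
    and [measurable]: "X \<in> borel_measurable M" "Measurable.pred M P"
    and q: "0 \<le> q" "q \<le> q'" "q' \<le> 1"
  shows "\<P>(\<omega> in M. ereal (X \<omega>) \<le> Phi_inv q \<and> P \<omega>)
      \<le> \<P>(\<omega> in M. ereal (X \<omega>) \<le> Phi_inv q' \<and> P \<omega>)" (is "?lower \<le> ?upper")
    and "\<P>(\<omega> in M. ereal (X \<omega>) \<le> Phi_inv q' \<and> P \<omega>)
      - \<P>(\<omega> in M. ereal (X \<omega>) \<le> Phi_inv q \<and> P \<omega>) \<le> q' - q"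
proof -
  define below where "below r = {\<omega> \<in> space M. ereal (X \<omega>) \<le> Phi_inv r}" for r
  define E where "E = {\<omega> \<in> space M. P \<omega>}"
  have events: "below r \<in> events" "E \<in> events" for r
    unfolding below_def E_def by measurable
  have conj: "\<P>(\<omega> in M. ereal (X \<omega>) \<le> Phi_inv r \<and> P \<omega>) = prob (below r \<inter> E)" for r
    unfolding below_def E_def by (rule arg_cong[where f=prob]) auto
  have marginal: "prob (below r) = r" if "0 \<le> r" "r \<le> 1" for r
  proof -
    have "prob (below r) = measure (distr M lborel X) {x. ereal x \<le> Phi_inv r}"
      unfolding below_def by (subst measure_distr) (auto simp: vimage_def Int_def conj_commute)
    then show ?thesis
      using X measure_std_normal_le_Phi_inv that by simp
  qed
  have "below q \<subseteq> below q'"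
    using Phi_inv_mono[OF q] by (auto simp: below_def intro: order_trans)
  from prob_Int_increment_le[OF this events(1,1,2)] marginal q
  show "?lower \<le> ?upper" "?upper - ?lower \<le> q' - q"
    by (simp_all add: conj)
qed

lemma Gamma_eq_prob:
  "Gamma \<rho> q1 q2 = \<P>(\<omega> in std_normal_pair.
     ereal (fst \<omega>) \<le> Phi_inv q1 \<and> ereal (\<rho> * fst \<omega> + sqrt (1 - \<rho>\<^sup>2) * snd \<omega>) \<le> Phi_inv q2)"
  unfolding Gamma_def by (rule arg_cong[where f="measure _"]) auto

lemma Gamma_increment_fst:
  assumes "0 \<le> q" "q \<le> q'" "q' \<le> 1"
  shows "0 \<le> Gamma \<rho> q' p - Gamma \<rho> q p" and "Gamma \<rho> q' p - Gamma \<rho> q p \<le> q' - q"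
  using prob_space.prob_std_normal_quantile_increment[OF prob_space_std_normal_pair
      distr_std_normal_pair_fst _ _ assms,
      of "\<lambda>\<omega>. ereal (\<rho> * fst \<omega> + sqrt (1 - \<rho>\<^sup>2) * snd \<omega>) \<le> Phi_inv p"]
  by (simp_all add: Gamma_eq_prob)

lemma Gamma_increment_snd:
  assumes "\<bar>\<rho>\<bar> \<le> 1" "0 \<le> p" "p \<le> p'" "p' \<le> 1"
  shows "0 \<le> Gamma \<rho> q p' - Gamma \<rho> q p" and "Gamma \<rho> q p' - Gamma \<rho> q p \<le> p' - p"
proof -
  have "\<rho>\<^sup>2 + (sqrt (1 - \<rho>\<^sup>2))\<^sup>2 = 1"
    using assms(1) by (simp add: abs_square_le_1)
  then have "distr std_normal_pair lborel (\<lambda>\<omega>. \<rho> * fst \<omega> + sqrt (1 - \<rho>\<^sup>2) * snd \<omega>) = std_normal"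
    using distributed_std_normal_pair_combination distributed_std_normal_iff by blast
  from prob_space.prob_std_normal_quantile_increment[OF prob_space_std_normal_pair
      this _ _ assms(2-4), of "\<lambda>\<omega>. ereal (fst \<omega>) \<le> Phi_inv q"]
  show "0 \<le> Gamma \<rho> q p' - Gamma \<rho> q p" "Gamma \<rho> q p' - Gamma \<rho> q p \<le> p' - p"
    by (simp_all add: Gamma_eq_prob conj_commute)
qed

lemma cut_probability_lipschitz:
  assumes "q1 \<in> {0..1}" "q1' \<in> {0..1}" "q2 \<in> {0..1}" "q2' \<in> {0..1}" "\<bar>\<rho>\<bar> \<le> 1"
  shows "\<bar>(q1 + q2 - 2 * Gamma \<rho> q1 q2) - (q1' + q2' - 2 * Gamma \<rho> q1' q2')\<bar>
    \<le> \<bar>q1 - q1'\<bar> + \<bar>q2 - q2'\<bar>"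
proof -
  have "\<bar>(q1 - q1') - 2 * (Gamma \<rho> q1 q2 - Gamma \<rho> q1' q2)\<bar> \<le> \<bar>q1 - q1'\<bar>"
    using Gamma_increment_fst[of q1 q1' \<rho> q2] Gamma_increment_fst[of q1' q1 \<rho> q2] assms
    by (cases "q1 \<le> q1'") auto
  moreover have "\<bar>(q2 - q2') - 2 * (Gamma \<rho> q1' q2 - Gamma \<rho> q1' q2')\<bar> \<le> \<bar>q2 - q2'\<bar>"
    using Gamma_increment_snd[of \<rho> q2 q2' q1'] Gamma_increment_snd[of \<rho> q2' q2 q1'] assms
    by (cases "q2 \<le> q2'") auto
  moreover have "(q1 + q2 - 2 * Gamma \<rho> q1 q2) - (q1' + q2' - 2 * Gamma \<rho> q1' q2') =
    ((q1 - q1') - 2 * (Gamma \<rho> q1 q2 - Gamma \<rho> q1' q2))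
      + ((q2 - q2') - 2 * (Gamma \<rho> q1' q2 - Gamma \<rho> q1' q2'))"
    by simp
  ultimately show ?thesis
    by linarith
qed

text \<open>With \<open>p\<^sub>1, \<dots>, p\<^sub>4\<close> four times the probabilities of the sign patterns \<open>++, +-, -+, --\<close>
  of a pair of \<open>\<plusminus>1\<close> variables \<open>x, y\<close> with \<open>E x = a\<close>, \<open>E y = b\<close>, \<open>E xy = c\<close>, the claim reads
  \<open>(p\<^sub>1 p\<^sub>4 - p\<^sub>2 p\<^sub>3)\<^sup>2 \<le> (p\<^sub>1 + p\<^sub>2)(p\<^sub>3 + p\<^sub>4)(p\<^sub>1 + p\<^sub>3)(p\<^sub>2 + p\<^sub>4)\<close>.\<close>
lemma config_covariance_sq_le:
  assumes "is_config (a, b, c)"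
  shows "(c - a * b)\<^sup>2 \<le> (1 - a\<^sup>2) * (1 - b\<^sup>2)"
proof -
  define p1 p2 p3 p4 where "p1 = 1 + a + b + c" and "p2 = 1 + a - b - c"
    and "p3 = 1 - a + b - c" and "p4 = 1 - a - b + c"
  have nonneg: "p1 \<ge> 0" "p2 \<ge> 0" "p3 \<ge> 0" "p4 \<ge> 0"
    using assms by (auto simp: is_config_def p1_def p2_def p3_def p4_def abs_if split: if_splits)
  define R where "R = (p1 + p2) * (p3 + p4) * (p1 + p3) * (p2 + p4)"
  have "(p1 * p4)\<^sup>2 = (p1 * p1) * (p4 * p4)"
    by (simp add: power2_eq_square)
  also have "\<dots> \<le> ((p1 + p2) * (p1 + p3)) * ((p3 + p4) * (p2 + p4))"
    using nonneg by (intro mult_mono) (auto intro!: mult_mono)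
  finally have "(p1 * p4)\<^sup>2 \<le> R"
    by (simp add: R_def ac_simps)
  have "(p2 * p3)\<^sup>2 = (p2 * p2) * (p3 * p3)"
    by (simp add: power2_eq_square)
  also have "\<dots> \<le> ((p1 + p2) * (p2 + p4)) * ((p3 + p4) * (p1 + p3))"
    using nonneg by (intro mult_mono) (auto intro!: mult_mono)
  finally have "(p2 * p3)\<^sup>2 \<le> R"
    by (simp add: R_def ac_simps)
  have "\<bar>p1 * p4 - p2 * p3\<bar> \<le> max (p1 * p4) (p2 * p3)"
    using nonneg by (simp add: max_def abs_if)
  then have "(p1 * p4 - p2 * p3)\<^sup>2 \<le> (max (p1 * p4) (p2 * p3))\<^sup>2"
    by (metis abs_ge_zero power2_abs power_mono)
  also have "\<dots> \<le> R"
    using \<open>(p1 * p4)\<^sup>2 \<le> R\<close> \<open>(p2 * p3)\<^sup>2 \<le> R\<close> by (simp add: max_def)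
  finally have "(p1 * p4 - p2 * p3)\<^sup>2 \<le> R" .
  moreover have "(p1 * p4 - p2 * p3)\<^sup>2 = 16 * (c - a * b)\<^sup>2"
    and "R = 16 * ((1 - a\<^sup>2) * (1 - b\<^sup>2))"
    by (simp_all add: p1_def p2_def p3_def p4_def R_def algebra_simps power2_eq_square)
  ultimately show ?thesis
    by linarith
qed

lemma abs_rel_bias_le_1:
  assumes "is_config \<theta>"
  shows "\<bar>rel_bias \<theta>\<bar> \<le> 1"
proof -
  obtain a b c where \<theta>: "\<theta> = (a, b, c)"
    by (cases \<theta>)
  define d where "d = sqrt ((1 - a\<^sup>2) * (1 - b\<^sup>2))"
  have "\<bar>c - a * b\<bar> \<le> d"
    unfolding d_def using config_covariance_sq_le assms \<theta>
    by (metis real_sqrt_abs real_sqrt_le_mono)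
  then show ?thesis
    by (auto simp: rel_bias_def \<theta> Let_def d_def[symmetric] abs_divide divide_le_eq_1)
qed

lemma abs_expectation_diff_le:
  fixes f g :: "'a \<Rightarrow> real"
  assumes "finite (set_pmf D)" and "\<And>x. x \<in> set_pmf D \<Longrightarrow> \<bar>f x - g x\<bar> \<le> C"
  shows "\<bar>measure_pmf.expectation D f - measure_pmf.expectation D g\<bar> \<le> C"
proof -
  have integrable: "integrable (measure_pmf D) h" for h :: "'a \<Rightarrow> real"
    by (rule integrable_measure_pmf_finite[OF assms(1)])
  have "\<bar>measure_pmf.expectation D f - measure_pmf.expectation D g\<bar>
      = \<bar>measure_pmf.expectation D (\<lambda>x. f x - g x)\<bar>"
    by (simp add: integrable)
  also have "\<dots> \<le> measure_pmf.expectation D (\<lambda>x. \<bar>f x - g x\<bar>)"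
    by (rule integral_abs_bound)
  also have "\<dots> \<le> C"
    using assms(2) by (intro measure_pmf.integral_le_const integrable) (simp add: AE_measure_pmf_iff)
  finally show ?thesis .
qed

theorem lemma2p15:
  fixes D :: "config pmf" and B :: "real set" and \<mu> :: "real pmf"
    and t1 t2 :: "real \<Rightarrow> real"
  assumes "is_blueprint D B \<mu>"
    and "is_threshold B t1" and "is_threshold B t2"
  shows "\<bar>Soundness D t1 - Soundness D t2\<bar> \<le> (\<Sum>b\<in>B. \<bar>t1 b - t2 b\<bar>)"
proof -
  have B: "B = biases D" and finite_D: "finite (set_pmf D)"
    and config: "\<And>\<theta>. \<theta> \<in> set_pmf D \<Longrightarrow> is_config \<theta>"
    using assms(1) by (auto simp: is_blueprint_def)
  have le_sum: "\<bar>t1 x - t2 x\<bar> \<le> (\<Sum>b\<in>B. \<bar>t1 b - t2 b\<bar>)" if "x \<in> B" for x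
    using finite_D by (intro member_le_sum that) (auto simp: B biases_def)
  define cut where "cut t \<theta> = (let q1 = (1 - t (fst \<theta>)) / 2; q2 = (1 - t (fst (snd \<theta>))) / 2
    in q1 + q2 - 2 * Gamma (rel_bias \<theta>) q1 q2)" for t \<theta>
  have Soundness_eq: "Soundness D t = measure_pmf.expectation D (cut t)" for t
    by (simp add: Soundness_def cut_def[abs_def] case_prod_unfold Let_def)
  have "\<bar>cut t1 \<theta> - cut t2 \<theta>\<bar> \<le> (\<Sum>b\<in>B. \<bar>t1 b - t2 b\<bar>)" if "\<theta> \<in> set_pmf D" for \<theta>
  proof -
    obtain a b c where \<theta>: "\<theta> = (a, b, c)"
      by (cases \<theta>)
    have "a \<in> B" "b \<in> B"
      using that by (force simp: B biases_def \<theta>)+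
    have "\<bar>cut t1 \<theta> - cut t2 \<theta>\<bar>
        \<le> \<bar>(1 - t1 a) / 2 - (1 - t2 a) / 2\<bar> + \<bar>(1 - t1 b) / 2 - (1 - t2 b) / 2\<bar>"
      using assms(2,3) \<open>a \<in> B\<close> \<open>b \<in> B\<close> abs_rel_bias_le_1[OF config[OF that]]
      unfolding cut_def \<theta> Let_def fst_conv snd_conv
      by (intro cut_probability_lipschitz) (auto simp: is_threshold_def)
    also have "\<dots> = \<bar>t1 a - t2 a\<bar> / 2 + \<bar>t1 b - t2 b\<bar> / 2"
      by (simp add: abs_minus_commute flip: diff_divide_distrib)
    also have "\<dots> \<le> (\<Sum>b\<in>B. \<bar>t1 b - t2 b\<bar>)"
      using le_sum[OF \<open>a \<in> B\<close>] le_sum[OF \<open>b \<in> B\<close>] by (simp add: field_simps)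
    finally show ?thesis .
  qed
  then show ?thesis
    unfolding Soundness_eq by (rule abs_expectation_diff_le[OF finite_D])
qed

end
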